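(* (i) If $C$ is a self-orthogonal linear code over $\mathbb{Z}_4+u\mathbb{Z}_4$, then for every codeword $c\in C$ and each $i\in\{1,2\}$, the number $n_{\mathfrak{U}_i}(c)$ of coordinates of $c$ lying in $\mathfrak{U}_i$ is even. (ii) If $C$ is a self-dual code over $\mathbb{Z}_4+u\mathbb{Z}_4$ of length $n$, then the vector $(2u,2u,\dots,2u)$ of length $n$ belongs to $C$.
   Context: $\mathbb{Z}_4+u\mathbb{Z}_4$ is the commutative ring of characteristic $4$ with $u^2=0$. A linear code of length $n$ is a submodule $C$ of $(\mathbb{Z}_4+u\mathbb{Z}_4)^n$; its dual $C^\perp$ is taken with respect to the Euclidean inner product $\sum_i x_iy_i$ computed in the ring; $C$ is self-orthogonal if $C\subseteq C^\perp$ and self-dual if $C=C^\perp$. The units of first type are $\mathfrak{U}_1=\{1,3,1+2u,3+2u\}$ and the units of second type are $\mathfrak{U}_2=\{1+u,3+u,1+3u,3+3u\}$. *)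

theory Defs
  imports Main "HOL-Library.Numeral_Type"
begin

text \<open>The ring Z4 + u Z4 (u^2 = 0): an element a + b u is represented as ZU a b
  with a, b in Z4 (the library type 4 of integers modulo 4).\<close>

datatype zu = ZU (re: "4") (im: "4")

instantiation zu :: comm_ring_1
begin
definition "zero_zu = ZU 0 0"
definition "one_zu = ZU 1 0"
definition "plus_zu x y = ZU (re x + re y) (im x + im y)"
definition "minus_zu x y = ZU (re x - re y) (im x - im y)"
definition "uminus_zu x = ZU (- re x) (- im x)"
definition "times_zu x y = ZU (re x * re y) (re x * im y + im x * re y)"
instance
  by standard (auto simp: zero_zu_def one_zu_def plus_zu_def minus_zu_def
      uminus_zu_def times_zu_def algebra_simps intro: zu.expand)
end

definition uu :: zu where "uu = ZU 0 1"

definition U1 :: "zu set" where "U1 = {ZU 1 0, ZU 3 0, ZU 1 2, ZU 3 2}"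
definition U2 :: "zu set" where "U2 = {ZU 1 1, ZU 3 1, ZU 1 3, ZU 3 3}"

definition words :: "nat \<Rightarrow> (nat \<Rightarrow> zu) set" where
  "words n = {x. \<forall>i\<ge>n. x i = 0}"

definition linear_code :: "nat \<Rightarrow> (nat \<Rightarrow> zu) set \<Rightarrow> bool" where
  "linear_code n C \<longleftrightarrow> C \<subseteq> words n \<and> (\<lambda>_. 0) \<in> C \<and>
     (\<forall>x\<in>C. \<forall>y\<in>C. (\<lambda>i. x i + y i) \<in> C) \<and>
     (\<forall>r. \<forall>x\<in>C. (\<lambda>i. r * x i) \<in> C)"

definition inner :: "nat \<Rightarrow> (nat \<Rightarrow> zu) \<Rightarrow> (nat \<Rightarrow> zu) \<Rightarrow> zu" where
  "inner n x y = (\<Sum>i<n. x i * y i)"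

definition dual :: "nat \<Rightarrow> (nat \<Rightarrow> zu) set \<Rightarrow> (nat \<Rightarrow> zu) set" where
  "dual n C = {y \<in> words n. \<forall>x\<in>C. inner n x y = 0}"

definition self_orthogonal :: "nat \<Rightarrow> (nat \<Rightarrow> zu) set \<Rightarrow> bool" where
  "self_orthogonal n C \<longleftrightarrow> C \<subseteq> dual n C"

definition self_dual :: "nat \<Rightarrow> (nat \<Rightarrow> zu) set \<Rightarrow> bool" where
  "self_dual n C \<longleftrightarrow> C = dual n C"

definition nU :: "zu set \<Rightarrow> nat \<Rightarrow> (nat \<Rightarrow> zu) \<Rightarrow> nat" where
  "nU U n c = card {i. i < n \<and> c i \<in> U}"

end

theory Submission
  imports Defs
begin

text \<open>For x = a + bu one has x * x = a * a + 2abu, which is 1 on the units of first type,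
  1 + 2u on the units of second type and 0 elsewhere. Hence \<open>\<langle>c, c\<rangle>\<close> = n1 + n2 (1 + 2u),
  where ni counts the coordinates of c in Ui; if it vanishes, then n1 + n2 and 2 n2 are
  divisible by 4, so both counts are even. Moreover 2u x = 2u x * x for every x, so
  \<open>\<langle>x, (2u,\<dots>,2u)\<rangle> = 2u \<langle>x, x\<rangle>\<close>; in a self-dual code this vanishes for every codeword,
  which puts (2u,\<dots>,2u) into the dual, that is, into the code. Neither part uses
  linearity of the code.\<close>

lemma Z4_cases: "(a::4) = 0 \<or> a = 1 \<or> a = 2 \<or> a = 3"
proof (cases a)
  case (of_int z)
  then have "z \<in> {0, 1, 2, 3}" by auto
  with of_int show ?thesis by auto
qed

lemma times_ZU: "ZU a b * ZU c d = ZU (a * c) (a * d + b * c)"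
  by (simp add: times_zu_def)

lemma square_zu: "x * x = of_bool (x \<in> U1) + of_bool (x \<in> U2) * ZU 1 2"
proof (cases x)
  case (ZU a b)
  then show ?thesis
    using Z4_cases[of a] Z4_cases[of b]
    by (elim disjE) (simp_all add: times_ZU U1_def U2_def one_zu_def zero_zu_def plus_zu_def)
qed

lemma two_u_eq: "2 * uu = ZU 0 2"
  by (simp add: mult_2 uu_def plus_zu_def)

lemma two_u_mult_square: "2 * uu * (x * x) = 2 * uu * x"
proof (cases x)
  case (ZU a b)
  then show ?thesis
    using Z4_cases[of a] by (auto simp: two_u_eq times_ZU)
qed

lemma inner_self_eq_counts:
  "inner n c c = of_nat (nU U1 n c) + of_nat (nU U2 n c) * ZU 1 2"
proof -
  have count: "(\<Sum>i<n. of_bool (c i \<in> U) :: zu) = of_nat (nU U n c)" for U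
  proof -
    have "{..<n} \<inter> {i. c i \<in> U} = {i. i < n \<and> c i \<in> U}"
      by auto
    then show ?thesis
      by (simp add: nU_def)
  qed
  have "inner n c c = (\<Sum>i<n. of_bool (c i \<in> U1)) + (\<Sum>i<n. of_bool (c i \<in> U2)) * ZU 1 2"
    by (simp only: inner_def square_zu sum.distrib sum_distrib_right)
  then show ?thesis
    by (simp only: count)
qed

lemma of_nat_zu: "of_nat k = ZU (of_nat k) 0"
  by (induction k) (simp_all add: zero_zu_def one_zu_def plus_zu_def)

lemma Z4_of_nat_eq_0_iff: "(of_nat k :: 4) = 0 \<longleftrightarrow> 4 dvd k"
  by (simp add: of_nat_eq_0_iff_char_dvd)

lemma even_counts_if_inner_self_zero:
  assumes "inner n c c = 0"
  shows "even (nU U1 n c) \<and> even (nU U2 n c)"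
proof -
  let ?n1 = "nU U1 n c" and ?n2 = "nU U2 n c"
  have "ZU (of_nat (?n1 + ?n2)) (of_nat (?n2 * 2)) = 0"
    using assms by (simp add: inner_self_eq_counts of_nat_zu times_ZU plus_zu_def)
  then have "of_nat (?n1 + ?n2) = (0::4) \<and> of_nat (?n2 * 2) = (0::4)"
    by (simp add: zero_zu_def)
  then have "4 dvd ?n1 + ?n2" and "4 dvd ?n2 * 2"
    unfolding Z4_of_nat_eq_0_iff by simp_all
  moreover have "4 dvd a + b \<Longrightarrow> 4 dvd b * 2 \<Longrightarrow> even a \<and> even b" for a b :: nat
    by presburger
  ultimately show ?thesis by blast
qed

lemma self_orthogonal_even_counts:
  assumes "self_orthogonal n C" and "c \<in> C"
  shows "even (nU U1 n c) \<and> even (nU U2 n c)"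
proof -
  have "inner n c c = 0"
    using assms unfolding self_orthogonal_def dual_def by blast
  then show ?thesis by (rule even_counts_if_inner_self_zero)
qed

lemma inner_all_two_u: "inner n x (\<lambda>i. if i < n then 2 * uu else 0) = 2 * uu * inner n x x"
proof -
  have "inner n x (\<lambda>i. if i < n then 2 * uu else 0) = (\<Sum>i<n. 2 * uu * x i)"
    by (simp add: inner_def mult.commute)
  also have "\<dots> = 2 * uu * inner n x x"
    by (simp add: inner_def sum_distrib_left two_u_mult_square)
  finally show ?thesis .
qed

lemma self_dual_contains_all_two_u:
  assumes "self_dual n C"
  shows "(\<lambda>i. if i < n then 2 * uu else 0) \<in> C"
proof -
  have "inner n x x = 0" if "x \<in> C" for x
    using assms that unfolding self_dual_def dual_def by blast
  then have "(\<lambda>i. if i < n then 2 * uu else 0) \<in> dual n C"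
    by (simp add: dual_def words_def inner_all_two_u)
  with assms show ?thesis by (simp add: self_dual_def)
qed

theorem theorem4p2:
  shows "(\<forall>n C. linear_code n C \<and> self_orthogonal n C \<longrightarrow>
            (\<forall>c\<in>C. even (nU U1 n c) \<and> even (nU U2 n c)))
       \<and> (\<forall>n C. linear_code n C \<and> self_dual n C \<longrightarrow>
            (\<lambda>i. if i < n then 2 * uu else 0) \<in> C)"
  using self_orthogonal_even_counts self_dual_contains_all_two_u by blast

end
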